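(* Let $\mathbb{K}$ be a field of characteristic $2$, let $(A,\cdot,\{-,-\},(-)^{\{2\}})$ be a restricted Poisson algebra, let $k\ge1$, and let $(A^t_k,\cdot,\mu_{(k)},\omega_{(k)})$ be a formal deformation of order $k$ of $A$, with $\mu_{(k)}=\{-,-\}+\sum_{i=1}^kt^i\mu_i$ and $\omega_{(k)}=(-)^{\{2\}}+\sum_{i=1}^kt^i\omega_i$. Then $(\mu_1,\omega_1)\in Z^2_{\rm PA}(A)$.
   Context: $\mathbb{K}$ has characteristic $2$. Restricted Poisson algebra: commutative associative $(A,\cdot)$ with Lie bracket satisfying $\{ab,c\}=a\{b,c\}+b\{a,c\}$, and a map $(-)^{\{2\}}$ with $(\lambda x)^{\{2\}}=\lambda^2x^{\{2\}}$, $\mathrm{ad}_{x^{\{2\}}}=\mathrm{ad}_x^2$, $(x+y)^{\{2\}}=x^{\{2\}}+y^{\{2\}}+\{x,y\}$, $(xy)^{\{2\}}=x^2y^{\{2\}}+y^2x^{\{2\}}+xy\{x,y\}$. $\mathfrak{X}^n(A)$: alternating $n$-linear maps $A^n\to A$ that are derivations of $\cdot$ in each argument. $C^2_{\rm PA}(A)$: pairs $(\varphi,\omega)$, $\varphi\in\mathfrak{X}^2(A)$, $\omega:A\to A$ with $\omega(\lambda x)=\lambda^2\omega(x)$, $\omega(x+y)=\omega(x)+\omega(y)+\varphi(x,y)$, $\omega(xy)=x^2\omega(y)+y^2\omega(x)+xy\varphi(x,y)$. $Z^2_{\rm PA}(A)$: those with $\mathrm{d}^2(\varphi,\omega)=0$,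 where $\mathrm{d}^2(\varphi,\omega)=(\mathrm{d}_{\rm CE}\varphi,\delta^2\omega)$, $\mathrm{d}_{\rm CE}\varphi(x,y,z)=\varphi(\{x,y\},z)+\varphi(\{x,z\},y)+\varphi(\{y,z\},x)+\{x,\varphi(y,z)\}+\{y,\varphi(x,z)\}+\{z,\varphi(x,y)\}$ and $\delta^2\omega(x,z)=\{x,\varphi(x,z)\}+\{z,\omega(x)\}+\varphi(x^{\{2\}},z)+\varphi(\{x,z\},x)$. $\mathbb{K}^t_k=\mathbb{K}[t]/(t^{k+1})$, $A^t_k=A\otimes\mathbb{K}^t_k$. A formal deformation of order $k$: $(\mu_i,\omega_i)\in C^2_{\rm PA}(A)$ for all $i$, such that $(A^t_k,\mu_{(k)},\omega_{(k)})$ is a restricted Lie algebra over $\mathbb{K}^t_k$ ($\mu_{(k)}$ extended $\mathbb{K}^t_k$-bilinearly, $\omega_{(k)}$ extended by $\omega(\lambda X)=\lambda^2\omega(X)$, $\omega(X+Y)=\omega(X)+\omega(Y)+\mu(X,Y)$). *)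

theory Defs
  imports "HOL.Vector_Spaces"
begin

(* A is a K-vector space: a type 'a :: ab_group_add with scalar multiplication
   scale :: 'k \<Rightarrow> 'a \<Rightarrow> 'a over a field 'k, satisfying vector_space scale. *)

definition bilin :: "('k::field \<Rightarrow> 'a::ab_group_add \<Rightarrow> 'a) \<Rightarrow> ('a \<Rightarrow> 'a \<Rightarrow> 'a) \<Rightarrow> bool" where
  "bilin scale f \<longleftrightarrow>
     (\<forall>x y z. f (x + y) z = f x z + f y z) \<and>
     (\<forall>x y z. f x (y + z) = f x y + f x z) \<and>
     (\<forall>c x y. f (scale c x) y = scale c (f x y)) \<and>
     (\<forall>c x y. f x (scale c y) = scale c (f x y))"

definition restricted_poisson ::
  "('k::field \<Rightarrow> 'a::ab_group_add \<Rightarrow> 'a) \<Rightarrow> ('a \<Rightarrow> 'a \<Rightarrow> 'a) \<Rightarrow> ('a \<Rightarrow> 'a \<Rightarrow> 'a) \<Rightarrow> ('a \<Rightarrow> 'a) \<Rightarrow> bool" where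
  "restricted_poisson scale m br sq \<longleftrightarrow>
     vector_space scale \<and>
     bilin scale m \<and> (\<forall>x y. m x y = m y x) \<and> (\<forall>x y z. m (m x y) z = m x (m y z)) \<and>
     bilin scale br \<and> (\<forall>x. br x x = 0) \<and>
     (\<forall>x y z. br x (br y z) + br y (br z x) + br z (br x y) = 0) \<and>
     (\<forall>a b c. br (m a b) c = m a (br b c) + m b (br a c)) \<and>
     (\<forall>c x. sq (scale c x) = scale (c^2) (sq x)) \<and>
     (\<forall>x y. br (sq x) y = br x (br x y)) \<and>
     (\<forall>x y. sq (x + y) = sq x + sq y + br x y) \<and>
     (\<forall>x y. sq (m x y) = m (m x x) (sq y) + m (m y y) (sq x) + m (m x y) (br x y))"

definition biderivation ::
  "('k::field \<Rightarrow> 'a::ab_group_add \<Rightarrow> 'a) \<Rightarrow> ('a \<Rightarrow> 'a \<Rightarrow> 'a) \<Rightarrow> ('a \<Rightarrow> 'a \<Rightarrow> 'a) \<Rightarrow> bool" where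
  "biderivation scale m \<phi> \<longleftrightarrow>
     bilin scale \<phi> \<and> (\<forall>x. \<phi> x x = 0) \<and>
     (\<forall>a b c. \<phi> (m a b) c = m a (\<phi> b c) + m b (\<phi> a c)) \<and>
     (\<forall>a b c. \<phi> c (m a b) = m a (\<phi> c b) + m b (\<phi> c a))"

definition C2_PA ::
  "('k::field \<Rightarrow> 'a::ab_group_add \<Rightarrow> 'a) \<Rightarrow> ('a \<Rightarrow> 'a \<Rightarrow> 'a) \<Rightarrow> ('a \<Rightarrow> 'a \<Rightarrow> 'a) \<Rightarrow> ('a \<Rightarrow> 'a) \<Rightarrow> bool" where
  "C2_PA scale m \<phi> \<omega> \<longleftrightarrow>
     biderivation scale m \<phi> \<and>
     (\<forall>c x. \<omega> (scale c x) = scale (c^2) (\<omega> x)) \<and>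
     (\<forall>x y. \<omega> (x + y) = \<omega> x + \<omega> y + \<phi> x y) \<and>
     (\<forall>x y. \<omega> (m x y) = m (m x x) (\<omega> y) + m (m y y) (\<omega> x) + m (m x y) (\<phi> x y))"

definition dCE :: "('a::ab_group_add \<Rightarrow> 'a \<Rightarrow> 'a) \<Rightarrow> ('a \<Rightarrow> 'a \<Rightarrow> 'a) \<Rightarrow> 'a \<Rightarrow> 'a \<Rightarrow> 'a \<Rightarrow> 'a" where
  "dCE br \<phi> x y z = \<phi> (br x y) z + \<phi> (br x z) y + \<phi> (br y z) x
      + br x (\<phi> y z) + br y (\<phi> x z) + br z (\<phi> x y)"

definition delta2 :: "('a::ab_group_add \<Rightarrow> 'a \<Rightarrow> 'a) \<Rightarrow> ('a \<Rightarrow> 'a) \<Rightarrow> ('a \<Rightarrow> 'a \<Rightarrow> 'a) \<Rightarrow> ('a \<Rightarrow> 'a) \<Rightarrow> 'a \<Rightarrow> 'a \<Rightarrow> 'a" where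
  "delta2 br sq \<phi> \<omega> x z = br x (\<phi> x z) + br z (\<omega> x) + \<phi> (sq x) z + \<phi> (br x z) x"

definition Z2_PA ::
  "('k::field \<Rightarrow> 'a::ab_group_add \<Rightarrow> 'a) \<Rightarrow> ('a \<Rightarrow> 'a \<Rightarrow> 'a) \<Rightarrow> ('a \<Rightarrow> 'a \<Rightarrow> 'a) \<Rightarrow> ('a \<Rightarrow> 'a)
     \<Rightarrow> ('a \<Rightarrow> 'a \<Rightarrow> 'a) \<Rightarrow> ('a \<Rightarrow> 'a) \<Rightarrow> bool" where
  "Z2_PA scale m br sq \<phi> \<omega> \<longleftrightarrow>
     C2_PA scale m \<phi> \<omega> \<and>
     (\<forall>x y z. dCE br \<phi> x y z = 0) \<and> (\<forall>x z. delta2 br sq \<phi> \<omega> x z = 0)"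

(* ---- Truncated polynomials: elements of A^t_k = A \<otimes> K[t]/(t^(k+1)) are
   coefficient sequences X :: nat \<Rightarrow> 'a with X i = 0 for i > k;
   X represents \<Sum>_{i\<le>k} t^i X i.  Likewise scalars of K^t_k. *)

definition trunc :: "nat \<Rightarrow> (nat \<Rightarrow> 'b::zero) \<Rightarrow> bool" where
  "trunc k X \<longleftrightarrow> (\<forall>i>k. X i = 0)"

definition tmul :: "nat \<Rightarrow> (nat \<Rightarrow> 'k::field) \<Rightarrow> (nat \<Rightarrow> 'k) \<Rightarrow> nat \<Rightarrow> 'k" where
  "tmul k L M n = (if n \<le> k then (\<Sum>j\<le>n. L j * M (n - j)) else 0)"

definition tsmul :: "('k::field \<Rightarrow> 'a::ab_group_add \<Rightarrow> 'a) \<Rightarrow> nat \<Rightarrow> (nat \<Rightarrow> 'k) \<Rightarrow> (nat \<Rightarrow> 'a) \<Rightarrow> nat \<Rightarrow> 'a" where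
  "tsmul scale k L X n = (if n \<le> k then (\<Sum>j\<le>n. scale (L j) (X (n - j))) else 0)"

definition brs :: "('a \<Rightarrow> 'a \<Rightarrow> 'a) \<Rightarrow> (nat \<Rightarrow> 'a \<Rightarrow> 'a \<Rightarrow> 'a) \<Rightarrow> nat \<Rightarrow> 'a \<Rightarrow> 'a \<Rightarrow> 'a" where
  "brs br mu i = (if i = 0 then br else mu i)"

definition sqs :: "('a \<Rightarrow> 'a) \<Rightarrow> (nat \<Rightarrow> 'a \<Rightarrow> 'a) \<Rightarrow> nat \<Rightarrow> 'a \<Rightarrow> 'a" where
  "sqs sq om i = (if i = 0 then sq else om i)"

(* \<mu>_(k) = {-,-} + \<Sum> t^i \<mu>_i, extended K^t_k-bilinearly *)
definition def_br :: "nat \<Rightarrow> ('a::ab_group_add \<Rightarrow> 'a \<Rightarrow> 'a) \<Rightarrow> (nat \<Rightarrow> 'a \<Rightarrow> 'a \<Rightarrow> 'a)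
    \<Rightarrow> (nat \<Rightarrow> 'a) \<Rightarrow> (nat \<Rightarrow> 'a) \<Rightarrow> nat \<Rightarrow> 'a" where
  "def_br k br mu X Y n =
     (if n \<le> k then (\<Sum>i\<le>n. \<Sum>j\<le>n - i. brs br mu i (X j) (Y (n - i - j))) else 0)"

(* \<omega>_(k) = (-)^{2} + \<Sum> t^i \<omega>_i, extended by \<omega>(\<lambda>X) = \<lambda>^2 \<omega>(X) and
   \<omega>(X+Y) = \<omega>(X)+\<omega>(Y)+\<mu>(X,Y); i.e. for X = \<Sum>_j t^j x_j:
   \<omega>_(k)(X) = \<Sum>_j t^(2j) \<omega>_(k)(x_j) + \<Sum>_{j<l} t^(j+l) \<mu>_(k)(x_j,x_l). *)
definition def_sq :: "nat \<Rightarrow> ('a::ab_group_add \<Rightarrow> 'a \<Rightarrow> 'a) \<Rightarrow> ('a \<Rightarrow> 'a) \<Rightarrow> (nat \<Rightarrow> 'a \<Rightarrow> 'a \<Rightarrow> 'a)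
    \<Rightarrow> (nat \<Rightarrow> 'a \<Rightarrow> 'a) \<Rightarrow> (nat \<Rightarrow> 'a) \<Rightarrow> nat \<Rightarrow> 'a" where
  "def_sq k br sq mu om X n =
     (if n \<le> k then
        (\<Sum>i\<le>n. \<Sum>j\<le>n. if i + 2 * j = n then sqs sq om i (X j) else 0)
      + (\<Sum>i\<le>n. \<Sum>j\<le>n. \<Sum>l\<le>n. if j < l \<and> i + j + l = n then brs br mu i (X j) (X l) else 0)
      else 0)"

definition tadd :: "(nat \<Rightarrow> 'a::ab_group_add) \<Rightarrow> (nat \<Rightarrow> 'a) \<Rightarrow> nat \<Rightarrow> 'a" where
  "tadd X Y n = X n + Y n"

definition restricted_lie_deformation ::
  "('k::field \<Rightarrow> 'a::ab_group_add \<Rightarrow> 'a) \<Rightarrow> nat \<Rightarrow> ('a \<Rightarrow> 'a \<Rightarrow> 'a) \<Rightarrow> ('a \<Rightarrow> 'a)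
     \<Rightarrow> (nat \<Rightarrow> 'a \<Rightarrow> 'a \<Rightarrow> 'a) \<Rightarrow> (nat \<Rightarrow> 'a \<Rightarrow> 'a) \<Rightarrow> bool" where
  "restricted_lie_deformation scale k br sq mu om \<longleftrightarrow>
    (let B = def_br k br mu; W = def_sq k br sq mu om in
     (\<forall>X Y Z. trunc k X \<longrightarrow> trunc k Y \<longrightarrow> trunc k Z \<longrightarrow>
        B (tadd X Y) Z = tadd (B X Z) (B Y Z) \<and> B X (tadd Y Z) = tadd (B X Y) (B X Z)) \<and>
     (\<forall>L X Y. trunc k L \<longrightarrow> trunc k X \<longrightarrow> trunc k Y \<longrightarrow>
        B (tsmul scale k L X) Y = tsmul scale k L (B X Y) \<and>
        B X (tsmul scale k L Y) = tsmul scale k L (B X Y)) \<and>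
     (\<forall>X. trunc k X \<longrightarrow> B X X = (\<lambda>n. 0)) \<and>
     (\<forall>X Y Z. trunc k X \<longrightarrow> trunc k Y \<longrightarrow> trunc k Z \<longrightarrow>
        tadd (tadd (B X (B Y Z)) (B Y (B Z X))) (B Z (B X Y)) = (\<lambda>n. 0)) \<and>
     (\<forall>L X. trunc k L \<longrightarrow> trunc k X \<longrightarrow>
        W (tsmul scale k L X) = tsmul scale k (tmul k L L) (W X)) \<and>
     (\<forall>X Y. trunc k X \<longrightarrow> trunc k Y \<longrightarrow> W (tadd X Y) = tadd (tadd (W X) (W Y)) (B X Y)) \<and>
     (\<forall>X Y. trunc k X \<longrightarrow> trunc k Y \<longrightarrow> B (W X) Y = B X (B X Y)))"

definition formal_deformation ::
  "('k::field \<Rightarrow> 'a::ab_group_add \<Rightarrow> 'a) \<Rightarrow> ('a \<Rightarrow> 'a \<Rightarrow> 'a) \<Rightarrow> nat \<Rightarrow> ('a \<Rightarrow> 'a \<Rightarrow> 'a) \<Rightarrow> ('a \<Rightarrow> 'a)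
     \<Rightarrow> (nat \<Rightarrow> 'a \<Rightarrow> 'a \<Rightarrow> 'a) \<Rightarrow> (nat \<Rightarrow> 'a \<Rightarrow> 'a) \<Rightarrow> bool" where
  "formal_deformation scale m k br sq mu om \<longleftrightarrow>
     (\<forall>i\<in>{1..k}. C2_PA scale m (mu i) (om i)) \<and>
     restricted_lie_deformation scale k br sq mu om"

end

theory Submission
  imports Defs
begin

text \<open>Take constant elements \<open>X = x\<close>, \<open>Y = y\<close>, \<open>Z = z\<close> of \<open>A\<^sup>t\<^sub>k\<close>. The coefficient of \<open>t\<close> in
  the Jacobi identity for \<open>\<mu>\<^sub>(\<^sub>k\<^sub>)\<close> is \<open>d\<^sub>C\<^sub>E \<mu>\<^sub>1 (x, y, z)\<close>, and the coefficient of \<open>t\<close> in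
  \<open>ad\<^bsub>\<omega>\<^sub>(\<^sub>k\<^sub>)(X)\<^esub> Y = ad\<^sub>X\<^sup>2 Y\<close> is \<open>\<delta>\<^sup>2\<omega>\<^sub>1 (x, y)\<close>, both up to the order of arguments, which
  is irrelevant because alternating bilinear maps are symmetric in characteristic 2.\<close>

lemma add_self_eq_0_if_CHAR_2:
  fixes scale :: "'k::field \<Rightarrow> 'a::ab_group_add \<Rightarrow> 'a" and u :: 'a
  assumes "CHAR('k) = 2" and "vector_space scale"
  shows "u + u = 0"
proof -
  interpret vector_space scale by (rule assms(2))
  have "(1::'k) + 1 = 0"
    using of_nat_CHAR[where 'a='k] assms(1) by simp
  then have "scale (1 + 1) u = 0" by simp
  then show ?thesis by (simp only: scale_left_distrib scale_one)
qed

lemma bilin_zero_left: "bilin scale f \<Longrightarrow> f 0 a = 0"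
  unfolding bilin_def by (metis add.right_neutral add_left_cancel)

lemma bilin_zero_right: "bilin scale f \<Longrightarrow> f a 0 = 0"
  unfolding bilin_def by (metis add.right_neutral add_left_cancel)

lemma alternating_bilin_commute:
  fixes f :: "'a::ab_group_add \<Rightarrow> 'a \<Rightarrow> 'a"
  assumes "bilin scale f" and "\<forall>x. f x x = 0" and "\<And>u::'a. u + u = 0"
  shows "f a b = f b a"
proof -
  have "f (a + b) (a + b) = f a a + f a b + (f b a + f b b)"
    using assms(1) unfolding bilin_def by (simp add: add_ac)
  then have "f a b + f b a = 0" using assms(2) by simp
  then show ?thesis
    using assms(3)[of "f b a"] by (metis add_right_cancel)
qed

definition tconst :: "'a::zero \<Rightarrow> nat \<Rightarrow> 'a" where
  "tconst x = (\<lambda>n. if n = 0 then x else 0)"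

lemma trunc_tconst: "trunc k (tconst x)"
  unfolding trunc_def tconst_def by simp

lemma tconst_0 [simp]: "tconst x 0 = x" and tconst_1 [simp]: "tconst x 1 = 0"
  unfolding tconst_def by simp_all

lemma def_br_coeff_0: "def_br k br mu X Y 0 = br (X 0) (Y 0)"
  by (simp add: def_br_def brs_def)

lemma def_br_coeff_1:
  "k \<ge> 1 \<Longrightarrow> def_br k br mu X Y 1 = br (X 0) (Y 1) + br (X 1) (Y 0) + mu 1 (X 0) (Y 0)"
  by (simp add: def_br_def brs_def atMost_Suc add_ac)

lemma def_sq_coeff_0: "def_sq k br sq mu om X 0 = sq (X 0)"
  by (simp add: def_sq_def sqs_def)

lemma def_sq_coeff_1: "k \<ge> 1 \<Longrightarrow> def_sq k br sq mu om X 1 = om 1 (X 0) + br (X 0) (X 1)"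
  by (simp add: def_sq_def sqs_def brs_def atMost_Suc add_ac)

lemmas def_coeffs_0_1 = def_br_coeff_0 def_br_coeff_1 def_sq_coeff_0 def_sq_coeff_1

lemma restricted_lie_deformation_jacobi_coeff_1:
  assumes "restricted_lie_deformation scale k br sq mu om" and "k \<ge> 1"
    and "bilin scale br" and "bilin scale (mu 1)"
  shows "br x (mu 1 y z) + mu 1 x (br y z) + (br y (mu 1 z x) + mu 1 y (br z x))
           + (br z (mu 1 x y) + mu 1 z (br x y)) = 0"
proof -
  let ?B = "def_br k br mu"
  have "tadd (tadd (?B (tconst x) (?B (tconst y) (tconst z)))
                   (?B (tconst y) (?B (tconst z) (tconst x))))
             (?B (tconst z) (?B (tconst x) (tconst y))) = (\<lambda>n. 0)"
    using assms(1) trunc_tconst unfolding restricted_lie_deformation_def Let_def by blast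
  then have "tadd (tadd (?B (tconst x) (?B (tconst y) (tconst z)))
                        (?B (tconst y) (?B (tconst z) (tconst x))))
                  (?B (tconst z) (?B (tconst x) (tconst y))) 1 = 0"
    by simp
  then show ?thesis
    by (simp only: tadd_def def_coeffs_0_1 assms(2) tconst_0 tconst_1
        bilin_zero_left[OF assms(3)] bilin_zero_right[OF assms(3)]
        bilin_zero_left[OF assms(4)] bilin_zero_right[OF assms(4)] add_0_left add_0_right)
qed

lemma restricted_lie_deformation_ad_sq_coeff_1:
  assumes "restricted_lie_deformation scale k br sq mu om" and "k \<ge> 1"
    and "bilin scale br" and "bilin scale (mu 1)"
  shows "br (om 1 x) y + mu 1 (sq x) y = br x (mu 1 x y) + mu 1 x (br x y)"
proof -
  let ?B = "def_br k br mu"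
  have "?B (def_sq k br sq mu om (tconst x)) (tconst y) = ?B (tconst x) (?B (tconst x) (tconst y))"
    using assms(1) trunc_tconst unfolding restricted_lie_deformation_def Let_def by blast
  then have "?B (def_sq k br sq mu om (tconst x)) (tconst y) 1
               = ?B (tconst x) (?B (tconst x) (tconst y)) 1"
    by simp
  then show ?thesis
    by (simp only: def_coeffs_0_1 assms(2) tconst_0 tconst_1
        bilin_zero_left[OF assms(3)] bilin_zero_right[OF assms(3)]
        bilin_zero_left[OF assms(4)] bilin_zero_right[OF assms(4)] add_0_left add_0_right)
qed

theorem mainTheorem15:
  fixes scale :: "'k::field \<Rightarrow> 'a::ab_group_add \<Rightarrow> 'a"
    and m br :: "'a \<Rightarrow> 'a \<Rightarrow> 'a" and sq :: "'a \<Rightarrow> 'a"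
    and k :: nat and mu :: "nat \<Rightarrow> 'a \<Rightarrow> 'a \<Rightarrow> 'a" and om :: "nat \<Rightarrow> 'a \<Rightarrow> 'a"
  assumes "CHAR('k) = 2"
    and "restricted_poisson scale m br sq"
    and "k \<ge> 1"
    and "formal_deformation scale m k br sq mu om"
  shows "Z2_PA scale m br sq (mu 1) (om 1)"
proof -
  have cochain: "C2_PA scale m (mu 1) (om 1)" and RL: "restricted_lie_deformation scale k br sq mu om"
    using assms(3,4) unfolding formal_deformation_def by auto
  have "vector_space scale"
    using assms(2) unfolding restricted_poisson_def by blast
  note char2 = add_self_eq_0_if_CHAR_2[OF assms(1) this]
  have br: "bilin scale br" "\<forall>x. br x x = 0"
    using assms(2) unfolding restricted_poisson_def by auto
  have mu: "bilin scale (mu 1)" "\<forall>x. mu 1 x x = 0"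
    using cochain unfolding C2_PA_def biderivation_def by auto
  note commute = alternating_bilin_commute[OF br char2] alternating_bilin_commute[OF mu char2]
  have "dCE br (mu 1) x y z = 0" for x y z
    using restricted_lie_deformation_jacobi_coeff_1[OF RL assms(3) br(1) mu(1), of x y z]
    unfolding dCE_def by (metis (no_types, lifting) commute add.assoc add.commute add.left_commute)
  moreover have "delta2 br sq (mu 1) (om 1) x y = 0" for x y
    using restricted_lie_deformation_ad_sq_coeff_1[OF RL assms(3) br(1) mu(1), of x y] char2
    unfolding delta2_def by (metis commute add.assoc add.commute)
  ultimately show ?thesis
    unfolding Z2_PA_def using cochain by blast
qed

end
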